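(* Let $\mathbf{L}=\langle L,\leq,0,1\rangle$ be a totally ordered complete lattice and let $\mathcal{D}_1,\mathcal{D}_2$ be ranked data tables on the same relation scheme $R$. Then $\mathcal{D}_1 \sqsubseteq \mathcal{D}_2$ if and only if for every $r \in \mathrm{Tupl}(R)$ we have $\mathcal{L}(\mathcal{D}_1,r) \subseteq \mathcal{L}(\mathcal{D}_2,r)$.
   Context: A relation scheme $R$ is a finite set of attributes, each attribute having a (at most countable) set of admissible values; a tuple on $R$ is a map assigning to each attribute $y\in R$ an admissible value, and $\mathrm{Tupl}(R)$ denotes the set of all tuples on $R$. A ranked data table (RDT) on $R$ is a map $\mathcal{D}\colon \mathrm{Tupl}(R)\to L$ such that $\{r \in \mathrm{Tupl}(R);\ \mathcal{D}(r)>0\}$ is finite. For an RDT $\mathcal{D}$ on $R$ and $r\in\mathrm{Tupl}(R)$ put $\mathcal{U}(\mathcal{D},r)=\{r'\in\mathrm{Tupl}(R);\ \mathcal{D}(r')\geq \mathcal{D}(r)\}$ and $\mathcal{L}(\mathcal{D},r)=\{r'\in\mathrm{Tupl}(R);\ \mathcal{D}(r')\leq \mathcal{D}(r)\}$. $\mathcal{D}_1$ is ordinally included in $\mathcal{D}_2$, written $\mathcal{D}_1\sqsubseteq\mathcal{D}_2$, if $\mathcal{U}(\mathcal{D}_1,r)\subseteq\mathcal{U}(\mathcal{D}_2,r)$ for all $r\in\mathrm{Tupl}(R)$. *)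

theory Defs
  imports Main "HOL-Library.FuncSet" "HOL-Library.Countable_Set"
begin

definition relation_scheme :: "'a set \<Rightarrow> ('a \<Rightarrow> 'v set) \<Rightarrow> bool" where
  "relation_scheme R adom \<longleftrightarrow> finite R \<and> (\<forall>y\<in>R. countable (adom y))"

definition Tupl :: "'a set \<Rightarrow> ('a \<Rightarrow> 'v set) \<Rightarrow> ('a \<Rightarrow> 'v) set" where
  "Tupl R adom = (\<Pi>\<^sub>E y\<in>R. adom y)"

text \<open>A ranked data table on R: a map from Tupl(R) to L with finitely many
 tuples of positive rank.  Values on non-tuples are irrelevant.\<close>

definition RDT :: "'a set \<Rightarrow> ('a \<Rightarrow> 'v set) \<Rightarrow> (('a \<Rightarrow> 'v) \<Rightarrow> 'l::{complete_lattice}) \<Rightarrow> bool" where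
  "RDT R adom D \<longleftrightarrow> finite {r \<in> Tupl R adom. D r > bot}"

definition upper_set :: "'a set \<Rightarrow> ('a \<Rightarrow> 'v set) \<Rightarrow> (('a \<Rightarrow> 'v) \<Rightarrow> 'l::complete_lattice) \<Rightarrow> ('a \<Rightarrow> 'v) \<Rightarrow> ('a \<Rightarrow> 'v) set" where
  "upper_set R adom D r = {r' \<in> Tupl R adom. D r' \<ge> D r}"

definition lower_set :: "'a set \<Rightarrow> ('a \<Rightarrow> 'v set) \<Rightarrow> (('a \<Rightarrow> 'v) \<Rightarrow> 'l::complete_lattice) \<Rightarrow> ('a \<Rightarrow> 'v) \<Rightarrow> ('a \<Rightarrow> 'v) set" where
  "lower_set R adom D r = {r' \<in> Tupl R adom. D r' \<le> D r}"

definition ord_incl :: "'a set \<Rightarrow> ('a \<Rightarrow> 'v set) \<Rightarrow> (('a \<Rightarrow> 'v) \<Rightarrow> 'l::complete_lattice) \<Rightarrow> (('a \<Rightarrow> 'v) \<Rightarrow> 'l) \<Rightarrow> bool" where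
  "ord_incl R adom D1 D2 \<longleftrightarrow> (\<forall>r\<in>Tupl R adom. upper_set R adom D1 r \<subseteq> upper_set R adom D2 r)"

end

theory Submission
  imports Defs
begin

text \<open>Both inclusions say the same thing: every ranking D1 r \<le> D1 r' between tuples
 is preserved by D2.  The upper sets read this with r fixed, the lower sets with r' fixed.\<close>

lemma ord_incl_iff_rank_preserving:
  "ord_incl R adom D1 D2 \<longleftrightarrow>
   (\<forall>r\<in>Tupl R adom. \<forall>r'\<in>Tupl R adom. D1 r \<le> D1 r' \<longrightarrow> D2 r \<le> D2 r')"
  unfolding ord_incl_def upper_set_def by blast

lemma lower_set_incl_iff_rank_preserving:
  "(\<forall>r\<in>Tupl R adom. lower_set R adom D1 r \<subseteq> lower_set R adom D2 r) \<longleftrightarrow>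
   (\<forall>r\<in>Tupl R adom. \<forall>r'\<in>Tupl R adom. D1 r' \<le> D1 r \<longrightarrow> D2 r' \<le> D2 r)"
  unfolding lower_set_def by blast

theorem theorem2:
  fixes R :: "'a set" and adom :: "'a \<Rightarrow> 'v set"
    and D1 D2 :: "('a \<Rightarrow> 'v) \<Rightarrow> 'l::{complete_lattice, linorder}"
  assumes "relation_scheme R adom"
    and "RDT R adom D1" and "RDT R adom D2"
  shows "ord_incl R adom D1 D2 \<longleftrightarrow>
         (\<forall>r\<in>Tupl R adom. lower_set R adom D1 r \<subseteq> lower_set R adom D2 r)"
  unfolding ord_incl_iff_rank_preserving lower_set_incl_iff_rank_preserving by blast

end
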